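(* For every integer $\kappa\geq 1$ and every $z\ge1$, \[ F_{\kappa+1}(z) \geq \frac{P(\kappa)}{P(\kappa+1)}\prod_{p\leq \kappa+1}\left(1-\frac{1}{p}\right)\sum_{\substack{\ell\leq z\\(\ell,P(\kappa+1))=1}}\mu^2(\ell)\frac{\tau_\kappa(\ell)}{\psi_{\kappa+1}(\ell)\,\ell}\int_1^{z/\ell}\frac{F_\kappa(t)}{t}\,dt.\]
   Context: For $y>0$ let $P(y)=\prod_{p\le y}p$. For an integer $k\ge1$ and $y>0$, $F_k(y)=\sum_{q\leq y,\ (q,P(k))=1}\mu^2(q)\prod_{p\mid q}\frac{k}{p-k}$. $\tau_n(m)$ is the number of ordered $n$-tuples $(d_1,\dots,d_n)$ of positive integers with $d_1\cdots d_n=m$, and $\psi_n(m)=\prod_{p\mid m,\ p>n}(p-n)$. *)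

theory Defs
  imports "HOL-Analysis.Analysis" "HOL-Computational_Algebra.Squarefree"
begin

definition primorial :: "real \<Rightarrow> nat" where
  "primorial y = (\<Prod>p\<in>{p::nat. prime p \<and> real p \<le> y}. p)"

text \<open>mu^2(q): square of the Moebius function, i.e. the indicator of squarefreeness.\<close>
definition mu2 :: "nat \<Rightarrow> real" where
  "mu2 q = (if squarefree q then 1 else 0)"

definition Fk :: "nat \<Rightarrow> real \<Rightarrow> real" where
  "Fk k y = (\<Sum>q\<in>{q::nat. 0 < q \<and> real q \<le> y \<and> coprime q (primorial (real k))}.
      mu2 q * (\<Prod>p\<in>prime_factors q. real k / (real p - real k)))"

definition tau :: "nat \<Rightarrow> nat \<Rightarrow> nat" where
  "tau n m = card {ds :: nat list. length ds = n \<and> (\<forall>d\<in>set ds. 0 < d) \<and> prod_list ds = m}"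

definition psi :: "nat \<Rightarrow> nat \<Rightarrow> real" where
  "psi n m = (\<Prod>p\<in>{p \<in> prime_factors m. n < p}. real p - real n)"

end

theory Submission
  imports Defs
begin

text \<open>A squarefree number is identified with its set of prime factors, so that both sides become
  sums over finite sets of primes larger than \<open>\<kappa> + 1\<close>. Integrating the step function \<open>F\<^sub>\<kappa>\<close> gives
  \<open>\<integral>\<^sub>1\<^sup>y F\<^sub>\<kappa>(t) / t dt = \<Sum>\<^sub>q \<mu>\<^sup>2(q) (\<Prod>p dvd q. \<kappa> / (p - \<kappa>)) ln (y / q)\<close>, and raising the sieving
  threshold from \<open>\<kappa>\<close> to \<open>\<kappa> + 1\<close> costs at most the factor \<open>P(\<kappa>) / P(\<kappa> + 1)\<close>. Together with
  \<open>\<tau>\<^sub>\<kappa>(\<ell>) \<le> \<kappa>\<^sup>\<omega>\<^sup>(\<^sup>\<ell>\<^sup>)\<close>, the right-hand side becomes a convolution which collapses, by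
  \<open>(1 + w) (1 + g) = 1 + \<kappa> / (p - \<kappa> - 1)\<close>, to
  \<open>\<Prod>\<^sub>p\<^sub>\<le>\<^sub>\<kappa>\<^sub>+\<^sub>1 (1 - 1/p) \<cdot> \<Sum>\<^sub>C (\<Prod>p\<in>C. \<kappa> / (p - \<kappa> - 1)) ln (z / C)\<close>. Finally, writing
  \<open>(\<kappa> + 1) / (p - \<kappa> - 1) = \<kappa> p / ((p - 1) (p - \<kappa> - 1)) + 1 / (p - 1)\<close> in \<open>F\<^sub>\<kappa>\<^sub>+\<^sub>1(z)\<close> produces
  sums of \<open>1 / \<phi>(n)\<close> over squarefree \<open>n\<close>; these dominate harmonic sums and hence
  \<open>\<Prod>(1 - 1/p) \<cdot> ln\<close>, which matches the convolution term by term.\<close>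

section \<open>Squarefree numbers as sets of primes\<close>

lemma two_le_real_prime: "prime (p::nat) \<Longrightarrow> 2 \<le> real p"
  using prime_ge_2_nat by (metis of_nat_le_iff of_nat_numeral)

lemma one_le_prod_primes: "\<forall>p\<in>T. prime (p::nat) \<Longrightarrow> 1 \<le> (\<Prod>p\<in>T. real p)"
proof (rule prod_ge_1)
  fix p assume "\<forall>p\<in>T. prime p" "p \<in> T"
  then have "2 \<le> real p" using two_le_real_prime by blast
  then show "1 \<le> real p" by linarith
qed

lemma ln_divide_antimono:
  fixes a b y :: real
  assumes "0 < a" "a \<le> b" "b \<le> y"
  shows "ln (y / b) \<le> ln (y / a)"
  using assms by (subst ln_le_cancel_iff) (auto intro: divide_left_mono)

lemma prime_factors_prod_primes:
  assumes "finite T" "\<forall>p\<in>T. prime (p::nat)"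
  shows "prime_factors (\<Prod>p\<in>T. p) = T"
proof -
  have "0 \<notin> id ` T" using assms by auto
  then have "prime_factors (prod id T) = \<Union> ((prime_factors \<circ> id) ` T)"
    using prime_factors_prod[OF assms(1)] by blast
  also have "\<dots> = T" using assms(2) by (auto simp: prime_prime_factors)
  finally show ?thesis by simp
qed

lemma squarefree_prod_primes:
  assumes "finite T" "\<forall>p\<in>T. prime (p::nat)"
  shows "squarefree (\<Prod>p\<in>T. p)"
proof (rule squarefree_prod_coprime)
qed (use assms in \<open>auto simp: primes_coprime squarefree_prime\<close>)

lemma prod_prime_factors_squarefree:
  assumes "squarefree (q::nat)"
  shows "(\<Prod>p\<in>prime_factors q. p) = q"
proof -
  have q: "q \<noteq> 0" using assms not_squarefree_0 by metis
  have "\<forall>p\<in>prime_factors q. multiplicity p q = 1"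
    using assms q by (simp add: squarefree_factorial_semiring')
  then have "(\<Prod>p\<in>prime_factors q. p) = (\<Prod>p\<in>prime_factors q. p ^ multiplicity p q)"
    by (intro prod.cong) auto
  also have "\<dots> = q" using prod_prime_factors[OF q] by simp
  finally show ?thesis .
qed

lemma finite_primes_le: "finite {p::nat. prime p \<and> real p \<le> y}"
  by (rule finite_subset[of _ "{..nat \<lfloor>y\<rfloor>}"]) (auto intro: le_nat_floor)

lemma coprime_primorial_iff:
  assumes "0 < (q::nat)"
  shows "coprime q (primorial y) \<longleftrightarrow> (\<forall>p\<in>prime_factors q. y < real p)"
proof
  assume coprime: "coprime q (primorial y)"
  show "\<forall>p\<in>prime_factors q. y < real p"
  proof (intro ballI, rule ccontr)
    fix p assume p: "p \<in> prime_factors q" and "\<not> y < real p"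
    then have "p dvd primorial y"
      unfolding primorial_def using finite_primes_le[of y] by (intro dvd_prodI) auto
    moreover have "p dvd q" using p by auto
    ultimately have "p dvd 1" using coprime by (metis coprime_common_divisor)
    then show False using p by (metis in_prime_factors_imp_prime not_prime_unit)
  qed
next
  assume large: "\<forall>p\<in>prime_factors q. y < real p"
  show "coprime q (primorial y)"
    unfolding primorial_def
  proof (rule prod_coprime_right)
    fix p assume p: "p \<in> {p::nat. prime p \<and> real p \<le> y}"
    show "coprime q p"
    proof (rule ccontr)
      assume "\<not> coprime q p"
      then have "p dvd q" using p by (metis coprime_commute mem_Collect_eq prime_imp_coprime)
      then have "p \<in> prime_factors q" using p assms by (auto simp: in_prime_factors_iff)
      then show False using large p by force
    qed
  qed
qed

text \<open>The squarefree numbers \<open>\<le> z\<close> without prime factors \<open>\<le> y\<close>, each represented by its set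
  of prime factors.\<close>
definition rough_sets :: "real \<Rightarrow> real \<Rightarrow> nat set set" where
  "rough_sets y z = {T. finite T \<and> (\<forall>p\<in>T. prime p \<and> y < real p) \<and> (\<Prod>p\<in>T. real p) \<le> z}"

lemma rough_setsD:
  assumes "S \<in> rough_sets y z"
  shows "finite S" "\<forall>p\<in>S. prime p" "\<forall>p\<in>S. y < real p" "(\<Prod>p\<in>S. real p) \<le> z"
  using assms unfolding rough_sets_def by auto

lemma rough_sets_prod_ge_1: "S \<in> rough_sets y z \<Longrightarrow> 1 \<le> (\<Prod>p\<in>S. real p)"
  using one_le_prod_primes rough_setsD(2) by blast

lemma rough_sets_mem_le: "S \<in> rough_sets y z \<Longrightarrow> p \<in> S \<Longrightarrow> real p \<le> z"
proof -
  assume S: "S \<in> rough_sets y z" and p: "p \<in> S"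
  note S' = rough_setsD[OF S]
  have "0 < (\<Prod>p\<in>S. p)" using S'(2) by (metis prime_gt_0_nat prod_pos)
  moreover have "p dvd (\<Prod>p\<in>S. p)" using S'(1) p by (rule dvd_prodI)
  ultimately have "p \<le> (\<Prod>p\<in>S. p)" by (simp add: dvd_imp_le)
  then have "real p \<le> real (\<Prod>p\<in>S. p)" by (simp only: of_nat_le_iff)
  with S'(4) show ?thesis by simp
qed

lemma finite_rough_sets: "finite (rough_sets y z)"
proof (rule finite_subset)
  show "rough_sets y z \<subseteq> Pow {..nat \<lfloor>z\<rfloor>}"
    by (auto dest: rough_sets_mem_le le_nat_floor)
qed simp

lemma sum_squarefree_coprime_primorial:
  fixes f :: "nat \<Rightarrow> real"
  shows "(\<Sum>q\<in>{q::nat. 0 < q \<and> real q \<le> z \<and> coprime q (primorial y)}. mu2 q * f q)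
       = (\<Sum>T\<in>rough_sets y z. f (\<Prod>p\<in>T. p))"
proof -
  define A where "A = {q::nat. 0 < q \<and> real q \<le> z \<and> coprime q (primorial y)}"
  have "finite A" unfolding A_def
    by (rule finite_subset[of _ "{..nat \<lfloor>z\<rfloor>}"]) (auto intro: le_nat_floor)
  then have "(\<Sum>q\<in>A. mu2 q * f q) = (\<Sum>q\<in>{q\<in>A. squarefree q}. mu2 q * f q)"
    by (intro sum.mono_neutral_right) (auto simp: mu2_def)
  also have "\<dots> = (\<Sum>q\<in>{q\<in>A. squarefree q}. f q)"
    by (rule sum.cong) (auto simp: mu2_def)
  also have "{q\<in>A. squarefree q} = (\<lambda>T. \<Prod>p\<in>T. p) ` rough_sets y z"
  proof (intro equalityI subsetI)
    fix q assume "q \<in> {q\<in>A. squarefree q}"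
    then have q: "0 < q" "squarefree q" "coprime q (primorial y)" "real q \<le> z"
      by (auto simp: A_def)
    have "real (\<Prod>p\<in>prime_factors q. p) \<le> z"
      using q(4) by (simp only: prod_prime_factors_squarefree[OF q(2)])
    then have "(\<Prod>p\<in>prime_factors q. real p) \<le> z" by simp
    then have "prime_factors q \<in> rough_sets y z"
      unfolding rough_sets_def using coprime_primorial_iff[OF q(1)] q(3) by auto
    then show "q \<in> (\<lambda>T. \<Prod>p\<in>T. p) ` rough_sets y z"
      using prod_prime_factors_squarefree[OF q(2)] by (metis image_eqI)
  next
    fix q assume "q \<in> (\<lambda>T. \<Prod>p\<in>T. p) ` rough_sets y z"
    then obtain T where T: "T \<in> rough_sets y z" and q: "q = (\<Prod>p\<in>T. p)" by auto
    note T' = rough_setsD[OF T]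
    have "0 < q" using q T'(2) by (simp add: prime_gt_0_nat prod_pos)
    then show "q \<in> {q\<in>A. squarefree q}"
      unfolding A_def using T' q coprime_primorial_iff[of q y] prime_factors_prod_primes[of T]
        squarefree_prod_primes[of T] by auto
  qed
  also have "(\<Sum>q\<in>(\<lambda>T. \<Prod>p\<in>T. p) ` rough_sets y z. f q) = (\<Sum>T\<in>rough_sets y z. f (\<Prod>p\<in>T. p))"
  proof (rule sum.reindex_cong[OF _ refl refl], rule inj_onI)
    fix S T assume "S \<in> rough_sets y z" "T \<in> rough_sets y z" "(\<Prod>p\<in>S. p) = (\<Prod>p\<in>T. p)"
    then show "S = T" using prime_factors_prod_primes rough_setsD(1,2) by metis
  qed
  finally show ?thesis unfolding A_def .
qed

section \<open>Sums of \<open>1 / \<phi>(n)\<close> and harmonic sums over smooth numbers\<close>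

text \<open>For a set \<open>P\<close> of primes, \<open>inv_totient_sum P x\<close> is the sum of \<open>1 / \<phi>(n)\<close> over the squarefree
  \<open>n \<le> x\<close> composed of primes in \<open>P\<close>.\<close>
definition inv_totient_sum :: "nat set \<Rightarrow> real \<Rightarrow> real" where
  "inv_totient_sum P x = (\<Sum>T\<in>{T. T \<subseteq> P \<and> (\<Prod>p\<in>T. real p) \<le> x}. \<Prod>p\<in>T. 1 / (real p - 1))"

definition smooth_numbers :: "nat set \<Rightarrow> real \<Rightarrow> nat set" where
  "smooth_numbers P x = {n. 0 < n \<and> real n \<le> x \<and> prime_factors n \<subseteq> P}"

definition inv_smooth_sum :: "nat set \<Rightarrow> real \<Rightarrow> real" where
  "inv_smooth_sum P x = (\<Sum>n\<in>smooth_numbers P x. 1 / real n)"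

lemma inv_totient_sum_term_nonneg:
  "\<forall>p\<in>P. prime (p::nat) \<Longrightarrow> T \<subseteq> P \<Longrightarrow> 0 \<le> (\<Prod>p\<in>T. 1 / (real p - 1))"
proof (intro prod_nonneg)
  fix p assume "\<forall>p\<in>P. prime (p::nat)" "T \<subseteq> P" "p \<in> T"
  then have "2 \<le> real p" using two_le_real_prime by blast
  then show "0 \<le> 1 / (real p - 1)" by simp
qed

lemma inv_totient_sum_nonneg: "\<forall>p\<in>P. prime (p::nat) \<Longrightarrow> 0 \<le> inv_totient_sum P x"
  unfolding inv_totient_sum_def using inv_totient_sum_term_nonneg by (intro sum_nonneg) auto

lemma inv_totient_sum_mono:
  assumes "finite P" "\<forall>p\<in>P. prime (p::nat)" "x \<le> x'"
  shows "inv_totient_sum P x \<le> inv_totient_sum P x'"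
  unfolding inv_totient_sum_def
proof (rule sum_mono2)
  show "finite {T. T \<subseteq> P \<and> (\<Prod>p\<in>T. real p) \<le> x'}"
    using assms(1) by (auto intro: finite_subset[of _ "Pow P"])
qed (use assms(2,3) inv_totient_sum_term_nonneg in auto)

lemma inv_totient_sum_less_1: "x < 1 \<Longrightarrow> \<forall>p\<in>P. prime (p::nat) \<Longrightarrow> inv_totient_sum P x = 0"
proof -
  assume "x < 1" "\<forall>p\<in>P. prime (p::nat)"
  then have "{T. T \<subseteq> P \<and> (\<Prod>p\<in>T. real p) \<le> x} = {}"
  proof (intro equalityI subsetI)
    fix T assume "T \<in> {T. T \<subseteq> P \<and> (\<Prod>p\<in>T. real p) \<le> x}"
    then have "T \<subseteq> P" "(\<Prod>p\<in>T. real p) \<le> x" by auto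
    moreover have "1 \<le> (\<Prod>p\<in>T. real p)" using calculation(1) \<open>\<forall>p\<in>P. prime p\<close>
      by (intro one_le_prod_primes) auto
    ultimately show "T \<in> {}" using \<open>x < 1\<close> by linarith
  qed simp
  then show ?thesis unfolding inv_totient_sum_def by (simp only: sum.empty)
qed

lemma inv_totient_sum_divide_le:
  assumes "finite P" "\<forall>p\<in>P. prime (p::nat)" "1 \<le> d"
  shows "inv_totient_sum P (x / d) \<le> inv_totient_sum P x"
proof (cases "x \<ge> 0")
  case True
  then have "x / d \<le> x" using assms(3) mult_left_mono[of 1 d x] by (simp add: divide_le_eq mult.commute)
  then show ?thesis using inv_totient_sum_mono assms by blast
next
  case False
  then have "x / d < 1" using assms(3) by (simp add: divide_less_eq)
  then show ?thesis using inv_totient_sum_less_1[of "x / d" P] inv_totient_sum_nonneg[of P x] assms by auto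
qed

lemma sum_subsets_insert:
  assumes "finite P" "p \<notin> P"
  shows "(\<Sum>T\<in>{T. T \<subseteq> insert p P \<and> Q T}. f T)
       = (\<Sum>T\<in>{T. T \<subseteq> P \<and> Q T}. f T) + (\<Sum>T\<in>{T. T \<subseteq> P \<and> Q (insert p T)}. f (insert p T))"
proof -
  have "{T. T \<subseteq> insert p P \<and> Q T} = {T. T \<subseteq> P \<and> Q T} \<union> insert p ` {T. T \<subseteq> P \<and> Q (insert p T)}"
  proof (intro equalityI subsetI)
    fix T assume T: "T \<in> {T. T \<subseteq> insert p P \<and> Q T}"
    show "T \<in> {T. T \<subseteq> P \<and> Q T} \<union> insert p ` {T. T \<subseteq> P \<and> Q (insert p T)}"
    proof (cases "p \<in> T")
      case True
      then have "T = insert p (T - {p})" by auto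
      moreover have "T - {p} \<in> {T. T \<subseteq> P \<and> Q (insert p T)}" using T calculation by auto
      ultimately show ?thesis by blast
    qed (use T in auto)
  qed (use assms(2) in auto)
  moreover have "inj_on (insert p) {T. T \<subseteq> P \<and> Q (insert p T)}"
    using assms(2) by (intro inj_onI) (metis (no_types, lifting) insert_ident mem_Collect_eq subsetD)
  moreover have "finite {T. T \<subseteq> P \<and> Q T}" "finite {T. T \<subseteq> P \<and> Q (insert p T)}"
    using assms(1) by (auto intro: finite_subset[of _ "Pow P"])
  moreover have "{T. T \<subseteq> P \<and> Q T} \<inter> insert p ` {T. T \<subseteq> P \<and> Q (insert p T)} = {}"
    using assms(2) by auto
  ultimately show ?thesis by (simp add: sum.union_disjoint sum.reindex)
qed

lemma inv_totient_sum_insert: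
  assumes "finite P" "prime p" "p \<notin> P"
  shows "inv_totient_sum (insert p P) x = inv_totient_sum P x + inv_totient_sum P (x / real p) / (real p - 1)"
proof -
  have "real p > 0" using assms(2) by (simp add: prime_gt_0_nat)
  have size: "(\<Prod>q\<in>insert p T. real q) \<le> x \<longleftrightarrow> (\<Prod>q\<in>T. real q) \<le> x / real p"
    and weight: "(\<Prod>q\<in>insert p T. 1 / (real q - 1)) = (\<Prod>q\<in>T. 1 / (real q - 1)) / (real p - 1)"
    if "T \<subseteq> P" for T
  proof -
    have "finite T" "p \<notin> T" using that assms(1,3) finite_subset by auto
    with \<open>real p > 0\<close> show "(\<Prod>q\<in>insert p T. real q) \<le> x \<longleftrightarrow> (\<Prod>q\<in>T. real q) \<le> x / real p"
      and "(\<Prod>q\<in>insert p T. 1 / (real q - 1)) = (\<Prod>q\<in>T. 1 / (real q - 1)) / (real p - 1)"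
      by (simp_all add: pos_le_divide_eq mult.commute)
  qed
  then have "{T. T \<subseteq> P \<and> (\<Prod>q\<in>insert p T. real q) \<le> x} = {T. T \<subseteq> P \<and> (\<Prod>q\<in>T. real q) \<le> x / real p}"
    by auto
  then show ?thesis
    unfolding inv_totient_sum_def sum_subsets_insert[OF assms(1,3)]
    by (simp add: sum_divide_distrib weight)
qed

lemma euler_factor_nonneg: "prime (p::nat) \<Longrightarrow> 0 \<le> 1 - 1 / real p"
  using two_le_real_prime[of p] by simp

lemma euler_factor_mult_inv_totient_sum_insert_le:
  assumes "finite P" "\<forall>q\<in>P. prime (q::nat)" "prime p" "p \<notin> P"
  shows "(1 - 1 / real p) * inv_totient_sum (insert p P) x \<le> inv_totient_sum P x"
proof -
  have p2: "2 \<le> real p" using two_le_real_prime[OF assms(3)] .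
  have "inv_totient_sum (insert p P) x \<le> inv_totient_sum P x + inv_totient_sum P x / (real p - 1)"
    unfolding inv_totient_sum_insert[OF assms(1,3,4)]
    using inv_totient_sum_divide_le[OF assms(1,2), of "real p" x] p2 by (simp add: divide_right_mono)
  also have "\<dots> = real p / (real p - 1) * inv_totient_sum P x"
    using p2 by (simp add: field_simps)
  finally show ?thesis using p2 by (simp add: field_simps)
qed

lemma euler_product_mult_inv_totient_sum_union_le:
  assumes "finite D" "finite P" "\<forall>p\<in>P \<union> D. prime (p::nat)" "D \<inter> P = {}"
  shows "(\<Prod>p\<in>D. 1 - 1 / real p) * inv_totient_sum (P \<union> D) x \<le> inv_totient_sum P x"
  using assms
proof (induction D rule: finite_induct)
  case (insert d D)
  then have "(1 - 1 / real d) * inv_totient_sum (insert d (P \<union> D)) x \<le> inv_totient_sum (P \<union> D) x"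
    by (intro euler_factor_mult_inv_totient_sum_insert_le) auto
  moreover have "0 \<le> (\<Prod>p\<in>D. 1 - 1 / real p)"
    using insert.prems by (intro prod_nonneg euler_factor_nonneg) auto
  ultimately have "(\<Prod>p\<in>D. 1 - 1 / real p) * ((1 - 1 / real d) * inv_totient_sum (insert d (P \<union> D)) x)
      \<le> (\<Prod>p\<in>D. 1 - 1 / real p) * inv_totient_sum (P \<union> D) x"
    by (rule mult_left_mono)
  then have "(\<Prod>p\<in>insert d D. 1 - 1 / real p) * inv_totient_sum (P \<union> insert d D) x
      \<le> (\<Prod>p\<in>D. 1 - 1 / real p) * inv_totient_sum (P \<union> D) x"
    using insert.hyps by (simp add: ac_simps)
  also have "\<dots> \<le> inv_totient_sum P x" using insert by auto
  finally show ?case .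
qed simp

lemma finite_smooth_numbers: "finite (smooth_numbers P x)"
  unfolding smooth_numbers_def
  by (rule finite_subset[of _ "{..nat \<lfloor>x\<rfloor>}"]) (auto intro: le_nat_floor)

lemma inv_smooth_sum_less_1: "x < 1 \<Longrightarrow> inv_smooth_sum P x = 0"
proof -
  assume "x < 1"
  then have "smooth_numbers P x = {}" unfolding smooth_numbers_def by auto
  then show ?thesis unfolding inv_smooth_sum_def by (simp only: sum.empty)
qed

lemma smooth_numbers_insert_not_dvd:
  assumes "prime p" "p \<notin> P"
  shows "smooth_numbers (insert p P) x - {n. p dvd n} = smooth_numbers P x"
  using assms by (auto simp: smooth_numbers_def in_prime_factors_iff)

lemma smooth_numbers_insert_dvd:
  assumes "prime p"
  shows "smooth_numbers (insert p P) x \<inter> {n. p dvd n} = (*) p ` smooth_numbers (insert p P) (x / real p)"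
proof -
  have "real p > 0" using assms by (simp add: prime_gt_0_nat)
  have "p * m \<in> smooth_numbers (insert p P) x \<longleftrightarrow> m \<in> smooth_numbers (insert p P) (x / real p)" for m
  proof (cases "m = 0")
    case False
    then have "prime_factors (p * m) = insert p (prime_factors m)"
      using assms prime_factors_product[of p m] by (simp add: prime_prime_factors prime_gt_0_nat)
    then show ?thesis using \<open>real p > 0\<close> False assms
      by (auto simp: smooth_numbers_def pos_le_divide_eq mult.commute)
  qed (simp add: smooth_numbers_def)
  then show ?thesis by (auto elim!: dvdE)
qed

lemma inv_smooth_sum_insert:
  assumes "prime p" "p \<notin> P"
  shows "inv_smooth_sum (insert p P) x = inv_smooth_sum P x + inv_smooth_sum (insert p P) (x / real p) / real p"
proof -
  have "inj_on ((*) p) (smooth_numbers (insert p P) (x / real p))"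
    using assms(1) by (intro inj_onI) (simp add: prime_gt_0_nat)
  then have "(\<Sum>n\<in>smooth_numbers (insert p P) x \<inter> {n. p dvd n}. 1 / real n)
      = (\<Sum>m\<in>smooth_numbers (insert p P) (x / real p). 1 / real m / real p)"
    unfolding smooth_numbers_insert_dvd[OF assms(1)] by (simp add: sum.reindex mult.commute[of _ "real p"])
  then show ?thesis
    unfolding inv_smooth_sum_def sum.Int_Diff[OF finite_smooth_numbers, of _ "insert p P" x "{n. p dvd n}"]
      smooth_numbers_insert_not_dvd[OF assms] by (simp add: sum_divide_distrib)
qed

lemma nat_floor_divide_less:
  assumes "1 \<le> x" "2 \<le> (d::real)"
  shows "nat \<lfloor>x / d\<rfloor> < nat \<lfloor>x\<rfloor>"
proof -
  have a: "of_int \<lfloor>x / d\<rfloor> \<le> x / d" by (rule of_int_floor_le)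
  have b: "x / d \<le> x / 2" using assms by (intro divide_left_mono) auto
  have c: "x - 1 < of_int \<lfloor>x\<rfloor>" by linarith
  have e: "1 \<le> \<lfloor>x\<rfloor>" using assms by linarith
  have "\<lfloor>x / d\<rfloor> < \<lfloor>x\<rfloor>"
  proof (rule ccontr)
    assume "\<not> \<lfloor>x / d\<rfloor> < \<lfloor>x\<rfloor>"
    then have "of_int \<lfloor>x\<rfloor> \<le> x / 2" using a b by linarith
    then have "x < 2" using c by linarith
    then have "of_int \<lfloor>x\<rfloor> < (1::real)" using \<open>of_int \<lfloor>x\<rfloor> \<le> x / 2\<close> by linarith
    then show False using e by linarith
  qed
  then show ?thesis using e by linarith
qed

lemma inv_smooth_sum_insert_le:
  assumes "finite P" "\<forall>q\<in>P. prime (q::nat)" "prime p" "p \<notin> P"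
    and le: "\<And>x. inv_smooth_sum P x \<le> inv_totient_sum P x"
  shows "inv_smooth_sum (insert p P) x \<le> inv_totient_sum (insert p P) x"
proof (induction "nat \<lfloor>x\<rfloor>" arbitrary: x rule: less_induct)
  case less
  have p2: "2 \<le> real p" using two_le_real_prime[OF assms(3)] .
  show ?case
  proof (cases "x < 1")
    case True
    then show ?thesis using inv_smooth_sum_less_1 inv_totient_sum_nonneg assms(2,3) by simp
  next
    case False
    then have "nat \<lfloor>x / real p\<rfloor> < nat \<lfloor>x\<rfloor>" using nat_floor_divide_less p2 by simp
    then have IH: "inv_smooth_sum (insert p P) (x / real p) \<le> inv_totient_sum (insert p P) (x / real p)"
      by (rule less)
    have "inv_smooth_sum (insert p P) x = inv_smooth_sum P x + inv_smooth_sum (insert p P) (x / real p) / real p"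
      by (rule inv_smooth_sum_insert[OF assms(3,4)])
    also have "\<dots> \<le> inv_totient_sum P x + inv_totient_sum (insert p P) (x / real p) / real p"
      using le[of x] IH p2 by (simp add: divide_right_mono add_mono)
    also have "inv_totient_sum (insert p P) (x / real p)
        = inv_totient_sum P (x / real p) + inv_totient_sum P (x / real p / real p) / (real p - 1)"
      by (rule inv_totient_sum_insert[OF assms(1,3,4)])
    also have "\<dots> \<le> inv_totient_sum P (x / real p) + inv_totient_sum P (x / real p) / (real p - 1)"
      using inv_totient_sum_divide_le[OF assms(1,2), of "real p" "x / real p"] p2
      by (simp add: divide_right_mono)
    also have "inv_totient_sum P x + (inv_totient_sum P (x / real p) + inv_totient_sum P (x / real p) / (real p - 1)) / real p
        = inv_totient_sum P x + inv_totient_sum P (x / real p) / (real p - 1)"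
      using p2 by (simp add: field_simps)
    also have "\<dots> = inv_totient_sum (insert p P) x"
      by (rule inv_totient_sum_insert[OF assms(1,3,4), symmetric])
    finally show ?thesis using p2 by (simp add: divide_right_mono)
  qed
qed

text \<open>Morally \<open>1 / (p - 1) = (\<Sum>j\<ge>1. p\<^sup>-\<^sup>j)\<close>, so \<open>1 / \<phi>(n)\<close> dominates the sum of \<open>1 / m\<close> over the
  \<open>m\<close> with radical \<open>n\<close>; instead of this series, the proof compares the recursions of both sums
  under \<open>x \<mapsto> x / p\<close>.\<close>
lemma inv_smooth_sum_le_inv_totient_sum:
  assumes "finite P" "\<forall>p\<in>P. prime (p::nat)"
  shows "inv_smooth_sum P x \<le> inv_totient_sum P x"
  using assms
proof (induction P arbitrary: x rule: finite_induct)
  case empty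
  have "n = 1" if "0 < n" "prime_factors n \<subseteq> {}" for n :: nat
    using that prime_factorization_empty_iff[of n] by auto
  then have "smooth_numbers {} x = (if 1 \<le> x then {1} else {})" unfolding smooth_numbers_def by auto
  moreover have "{T. T \<subseteq> {} \<and> (\<Prod>p\<in>T. real p) \<le> x} = (if 1 \<le> x then {{}} else {})" by auto
  ultimately show ?case unfolding inv_smooth_sum_def inv_totient_sum_def by simp
next
  case (insert p P)
  then show ?case by (intro inv_smooth_sum_insert_le) auto
qed

lemma ln_le_inv_smooth_sum:
  assumes x: "1 \<le> x" and small_primes: "{p. prime p \<and> real p \<le> x} \<subseteq> P"
  shows "ln x \<le> inv_smooth_sum P x"
proof -
  define m where "m = nat \<lfloor>x\<rfloor>"
  have real_m: "real m = of_int \<lfloor>x\<rfloor>" unfolding m_def using x by simp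
  have smooth_eq: "smooth_numbers P x = {1..m}"
  proof
    show "smooth_numbers P x \<subseteq> {1..m}"
      unfolding m_def smooth_numbers_def by (auto intro: le_nat_floor)
  next
    show "{1..m} \<subseteq> smooth_numbers P x"
    proof
      fix n assume n: "n \<in> {1..m}"
      have "real n \<le> real m" using n by simp
      also have "\<dots> \<le> x" using real_m by linarith
      finally have nx: "real n \<le> x" .
      have "prime_factors n \<subseteq> P"
      proof
        fix q assume q: "q \<in> prime_factors n"
        then have "q \<le> n" using n by (intro dvd_imp_le) auto
        then have "real q \<le> x" using nx by linarith
        then show "q \<in> P" using small_primes q by auto
      qed
      then show "n \<in> smooth_numbers P x" unfolding smooth_numbers_def using n nx by auto
    qed
  qed
  have "inv_smooth_sum P x = harm m" unfolding inv_smooth_sum_def smooth_eq harm_def by (simp add: inverse_eq_divide)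
  moreover have "ln (real m + 1) \<le> harm m" by (rule harm_ge_ln)
  moreover have "ln x \<le> ln (real m + 1)" using x real_m by (subst ln_le_cancel_iff) linarith+
  ultimately show ?thesis by linarith
qed

lemma ln_le_inv_totient_sum:
  assumes "1 \<le> y" "finite P" "finite D" "\<forall>p\<in>P \<union> D. prime (p::nat)"
    and "{p. prime p \<and> real p \<le> y} \<subseteq> P \<union> D"
  shows "(\<Prod>p\<in>D. 1 - 1 / real p) * ln y \<le> inv_totient_sum (P - D) y"
proof -
  have "ln y \<le> inv_smooth_sum (P \<union> D) y" using assms(1,5) by (rule ln_le_inv_smooth_sum)
  also have "\<dots> \<le> inv_totient_sum ((P - D) \<union> D) y"
    using inv_smooth_sum_le_inv_totient_sum assms(2-4) by (simp add: Un_Diff_cancel2)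
  finally have "(\<Prod>p\<in>D. 1 - 1 / real p) * ln y \<le> (\<Prod>p\<in>D. 1 - 1 / real p) * inv_totient_sum ((P - D) \<union> D) y"
    using assms(4) by (intro mult_left_mono prod_nonneg euler_factor_nonneg) auto
  also have "\<dots> \<le> inv_totient_sum (P - D) y"
    using assms(2-4) by (intro euler_product_mult_inv_totient_sum_union_le) auto
  finally show ?thesis .
qed

section \<open>The integral of \<open>F\<^sub>k(t) / t\<close>\<close>

lemma has_integral_indicator_divide:
  fixes c q y :: real
  assumes "1 \<le> q" "q \<le> y"
  shows "((\<lambda>t. if q \<le> t then c / t else 0) has_integral (c * ln (y / q))) {1..y}"
proof -
  have "((\<lambda>t. c / t) has_integral ((\<lambda>t. c * ln t) y - (\<lambda>t. c * ln t) q)) {q..y}"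
  proof (rule fundamental_theorem_of_calculus[OF assms(2)])
    fix x assume x: "x \<in> {q..y}"
    then have "((\<lambda>t. c * ln t) has_real_derivative c * inverse x) (at x within {q..y})"
      using assms by (auto intro!: derivative_eq_intros simp: divide_inverse)
    then show "((\<lambda>t. c * ln t) has_vector_derivative c / x) (at x within {q..y})"
      by (simp add: has_real_derivative_iff_has_vector_derivative divide_inverse)
  qed
  moreover have "c * ln y - c * ln q = c * ln (y / q)"
    using assms by (simp add: ln_div algebra_simps)
  ultimately have "((\<lambda>t. if t \<in> {q..y} then c / t else 0) has_integral (c * ln (y / q))) {1..y}"
    using has_integral_restrict_closed_subinterval[of "\<lambda>t. c / t" _ q y 1 y] assms
    unfolding cbox_interval by auto
  then show ?thesis by (rule has_integral_eq[rotated]) (use assms in auto)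
qed

lemma integral_partial_sum_divide:
  fixes c :: "nat \<Rightarrow> real"
  assumes "1 \<le> y" "0 \<notin> Q"
  shows "integral {1..y} (\<lambda>t. (\<Sum>q\<in>{q\<in>Q. real q \<le> t}. c q) / t)
       = (\<Sum>q\<in>{q\<in>Q. real q \<le> y}. c q * ln (y / real q))"
proof -
  define R where "R = {q\<in>Q. real q \<le> y}"
  have "finite R" unfolding R_def
    by (rule finite_subset[of _ "{..nat \<lfloor>y\<rfloor>}"]) (auto intro: le_nat_floor)
  have R_bounds: "1 \<le> real q" "real q \<le> y" if "q \<in> R" for q
  proof -
    show "1 \<le> real q" using that assms(2) unfolding R_def by (cases q) auto
    show "real q \<le> y" using that unfolding R_def by simp
  qed
  have "(\<Sum>q\<in>{q\<in>Q. real q \<le> t}. c q) / t = (\<Sum>q\<in>R. if real q \<le> t then c q / t else 0)"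
    if "t \<in> {1..y}" for t
  proof -
    have "{q\<in>Q. real q \<le> t} = {q\<in>R. real q \<le> t}" using that unfolding R_def by auto
    then show ?thesis
      by (auto simp: sum.inter_filter[OF \<open>finite R\<close>] sum_divide_distrib intro!: sum.cong)
  qed
  moreover have "((\<lambda>t. \<Sum>q\<in>R. if real q \<le> t then c q / t else 0)
      has_integral (\<Sum>q\<in>R. c q * ln (y / real q))) {1..y}"
    using \<open>finite R\<close> R_bounds by (intro has_integral_sum has_integral_indicator_divide)
  ultimately show ?thesis unfolding R_def[symmetric]
    by (intro integral_unique) (rule has_integral_eq[rotated], auto)
qed

text \<open>\<open>rough_log_sum w k y\<close> is the sum of \<open>(\<Prod>p dvd q. k / (p - k)) \<cdot> ln (y / q)\<close> over the squarefree
  \<open>q \<le> y\<close> without prime factors \<open>\<le> w\<close>; for \<open>w = k\<close> it equals \<open>\<integral>\<^sub>1\<^sup>y F\<^sub>k(t) / t dt\<close>.\<close>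
definition rough_log_sum :: "real \<Rightarrow> nat \<Rightarrow> real \<Rightarrow> real" where
  "rough_log_sum w k y =
     (\<Sum>A\<in>rough_sets w y. (\<Prod>p\<in>A. real k / (real p - real k)) * ln (y / (\<Prod>p\<in>A. real p)))"

lemma rough_log_sum_term_nonneg:
  assumes "A \<in> rough_sets w y" "real k \<le> w"
  shows "0 \<le> (\<Prod>p\<in>A. real k / (real p - real k)) * ln (y / (\<Prod>p\<in>A. real p))"
proof -
  note A = rough_setsD[OF assms(1)]
  have "0 \<le> (\<Prod>p\<in>A. real k / (real p - real k))"
    using A(3) assms(2) by (intro prod_nonneg) auto
  moreover have "1 \<le> (\<Prod>p\<in>A. real p)" using rough_sets_prod_ge_1[OF assms(1)] .
  then have "0 \<le> ln (y / (\<Prod>p\<in>A. real p))" using A(4) by simp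
  ultimately show ?thesis by simp
qed

lemma rough_log_sum_nonneg: "real k \<le> w \<Longrightarrow> 0 \<le> rough_log_sum w k y"
  unfolding rough_log_sum_def using rough_log_sum_term_nonneg by (intro sum_nonneg) auto

lemma Fk_eq_sum_rough_sets:
  "Fk k z = (\<Sum>S\<in>rough_sets (real k) z. \<Prod>p\<in>S. real k / (real p - real k))"
  unfolding Fk_def sum_squarefree_coprime_primorial
  by (intro sum.cong refl) (simp add: prime_factors_prod_primes rough_setsD)

lemma integral_Fk:
  assumes "1 \<le> y"
  shows "integral {1..y} (\<lambda>t. Fk k t / t) = rough_log_sum (real k) k y"
proof -
  define Q where "Q = {q::nat. 0 < q \<and> coprime q (primorial (real k))}"
  define c where "c = (\<lambda>q. mu2 q * (\<Prod>p\<in>prime_factors q. real k / (real p - real k)))"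
  have Fk_eq: "Fk k t = (\<Sum>q\<in>{q\<in>Q. real q \<le> t}. c q)" for t
    unfolding Fk_def Q_def c_def by (intro sum.cong) auto
  have "integral {1..y} (\<lambda>t. Fk k t / t) = (\<Sum>q\<in>{q\<in>Q. real q \<le> y}. c q * ln (y / real q))"
    unfolding Fk_eq using assms by (intro integral_partial_sum_divide) (auto simp: Q_def)
  also have "\<dots> = (\<Sum>q\<in>{q. 0 < q \<and> real q \<le> y \<and> coprime q (primorial (real k))}.
      mu2 q * ((\<Prod>p\<in>prime_factors q. real k / (real p - real k)) * ln (y / real q)))"
    unfolding Q_def c_def by (intro sum.cong) auto
  also have "\<dots> = rough_log_sum (real k) k y"
    unfolding sum_squarefree_coprime_primorial rough_log_sum_def
    by (intro sum.cong refl) (simp add: prime_factors_prod_primes rough_setsD)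
  finally show ?thesis .
qed

section \<open>Raising the threshold from \<open>k\<close> to \<open>k + 1\<close>\<close>

lemma rough_sets_Suc_split:
  "rough_sets (real k) y = rough_sets (real (k+1)) y \<union> {A \<in> rough_sets (real k) y. k + 1 \<in> A}"
proof (intro equalityI subsetI)
  fix A assume A: "A \<in> rough_sets (real k) y"
  show "A \<in> rough_sets (real (k+1)) y \<union> {A \<in> rough_sets (real k) y. k + 1 \<in> A}"
  proof (cases "k + 1 \<in> A")
    case False
    then have "\<forall>p\<in>A. real (k+1) < real p"
      using rough_setsD(3)[OF A] by (metis Suc_eq_plus1 Suc_lessI of_nat_less_iff)
    then show ?thesis using A unfolding rough_sets_def by auto
  qed (use A in auto)
qed (auto simp: rough_sets_def)

lemma rough_sets_remove_Suc:
  assumes A: "A \<in> rough_sets (real k) y" and kA: "k + 1 \<in> A"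
  shows "A - {k+1} \<in> rough_sets (real (k+1)) y"
    and "(\<Prod>p\<in>A. real k / (real p - real k)) * ln (y / (\<Prod>p\<in>A. real p))
      \<le> real k * ((\<Prod>p\<in>A - {k+1}. real k / (real p - real k)) * ln (y / (\<Prod>p\<in>A - {k+1}. real p)))"
proof -
  note A' = rough_setsD[OF A]
  have prod_A: "(\<Prod>p\<in>A. real p) = real (k+1) * (\<Prod>p\<in>A - {k+1}. real p)"
    using prod.remove[OF A'(1) kA, of real] by simp
  have le_prod_A: "1 * (\<Prod>p\<in>A - {k+1}. real p) \<le> real (k+1) * (\<Prod>p\<in>A - {k+1}. real p)"
    using A'(2) by (intro mult_right_mono) (auto intro: prod_nonneg)
  have "(\<Prod>p\<in>A - {k+1}. real p) \<le> y" using A'(4) prod_A le_prod_A by linarith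
  moreover have "real (k+1) < real p" if "p \<in> A - {k+1}" for p
  proof -
    have "k < p" "p \<noteq> k + 1" using that A'(3) by auto
    then have "k + 1 < p" by simp
    then show ?thesis by (simp only: of_nat_less_iff)
  qed
  ultimately show "A - {k+1} \<in> rough_sets (real (k+1)) y" using A' unfolding rough_sets_def by auto
  have weight_A: "(\<Prod>p\<in>A. real k / (real p - real k))
      = real k * (\<Prod>p\<in>A - {k+1}. real k / (real p - real k))"
    using prod.remove[OF A'(1) kA, of "\<lambda>p. real k / (real p - real k)"] by simp
  have "ln (y / (\<Prod>p\<in>A. real p)) \<le> ln (y / (\<Prod>p\<in>A - {k+1}. real p))"
    using A'(2,4) prod_A le_prod_A one_le_prod_primes[of "A - {k+1}"]
    by (intro ln_divide_antimono) auto
  moreover have "0 \<le> (\<Prod>p\<in>A - {k+1}. real k / (real p - real k))"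
    using A'(3) by (intro prod_nonneg) auto
  ultimately show "(\<Prod>p\<in>A. real k / (real p - real k)) * ln (y / (\<Prod>p\<in>A. real p))
      \<le> real k * ((\<Prod>p\<in>A - {k+1}. real k / (real p - real k)) * ln (y / (\<Prod>p\<in>A - {k+1}. real p)))"
    unfolding weight_A by (simp add: mult_left_mono mult.assoc)
qed

lemma rough_log_sum_le_Suc:
  "rough_log_sum (real k) k y \<le> real (k+1) * rough_log_sum (real (k+1)) k y"
proof -
  define F where "F = (\<lambda>A. (\<Prod>p\<in>A. real k / (real p - real k)) * ln (y / (\<Prod>p\<in>A. real p)))"
  define S1 where "S1 = rough_sets (real (k+1)) y"
  define S2 where "S2 = {A \<in> rough_sets (real k) y. k + 1 \<in> A}"
  have F_nonneg: "0 \<le> F A" if "A \<in> S1" for A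
    using that rough_log_sum_term_nonneg[of A "real (k+1)" y k] unfolding F_def S1_def by simp
  have remove_in_S1: "A - {k+1} \<in> S1" and F_remove: "F A \<le> real k * F (A - {k+1})" if "A \<in> S2" for A
    using that rough_sets_remove_Suc[of A k y] unfolding S1_def S2_def F_def by auto
  have "sum F S2 \<le> (\<Sum>A\<in>S2. real k * F (A - {k+1}))" using F_remove by (rule sum_mono)
  also have "\<dots> = real k * sum F ((\<lambda>A. A - {k+1}) ` S2)"
    by (subst sum.reindex) (auto simp: sum_distrib_left inj_on_def S2_def)
  also have "\<dots> \<le> real k * sum F S1"
    using remove_in_S1 F_nonneg finite_rough_sets[of "real (k+1)" y]
    by (intro mult_left_mono sum_mono2) (auto simp: S1_def)
  finally have "sum F S2 \<le> real k * sum F S1" .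
  moreover have "sum F (rough_sets (real k) y) = sum F S1 + sum F S2"
  proof -
    have "finite S1" "finite S2"
      unfolding S1_def S2_def using finite_rough_sets by auto
    moreover have "S1 \<inter> S2 = {}" unfolding S1_def S2_def rough_sets_def by auto
    ultimately show ?thesis
      unfolding S1_def S2_def by (subst rough_sets_Suc_split, intro sum.union_disjoint)
  qed
  ultimately show ?thesis unfolding rough_log_sum_def F_def[symmetric] S1_def
    by (simp add: algebra_simps)
qed

lemma primorial_pos: "0 < primorial y"
  unfolding primorial_def by (rule prod_pos) (auto simp: prime_gt_0_nat)

lemma primorial_Suc:
  "primorial (real (k+1)) = primorial (real k) * (if prime (k+1) then k+1 else 1)"
proof -
  have primes_le_Suc: "{p::nat. prime p \<and> real p \<le> real (k+1)}
      = {p. prime p \<and> real p \<le> real k} \<union> {p. p = k+1 \<and> prime p}"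
    by auto
  show ?thesis
  proof (cases "prime (k+1)")
    case True
    then have "{p::nat. prime p \<and> real p \<le> real (k+1)} = insert (k+1) {p. prime p \<and> real p \<le> real k}"
      using primes_le_Suc by auto
    then show ?thesis unfolding primorial_def using True finite_primes_le[of "real k"] by simp
  next
    case False
    then have "{p::nat. prime p \<and> real p \<le> real (k+1)} = {p. prime p \<and> real p \<le> real k}"
      using primes_le_Suc by auto
    then show ?thesis unfolding primorial_def using False by simp
  qed
qed

lemma primorial_ratio_mult_rough_log_sum_le:
  "real (primorial (real k)) / real (primorial (real (k+1))) * rough_log_sum (real k) k y
    \<le> rough_log_sum (real (k+1)) k y"
proof (cases "prime (k+1)")
  case True
  then have "primorial (real (k+1)) = primorial (real k) * (k+1)"
    using primorial_Suc[of k] by (simp only: if_True)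
  moreover have "real (primorial (real k)) \<noteq> 0" using primorial_pos by simp
  ultimately have ratio: "real (primorial (real k)) / real (primorial (real (k+1))) = 1 / real (k+1)"
    by (simp only: of_nat_mult nonzero_divide_mult_cancel_left not_False_eq_True)
  have "0 < real (k+1)" by simp
  then show ?thesis unfolding ratio using rough_log_sum_le_Suc[of k y]
    by (simp only: mult.commute[of "1 / _"] times_divide_eq_right mult_1_right pos_divide_le_eq)
       (simp only: mult.commute)
next
  case False
  then have "{A \<in> rough_sets (real k) y. k + 1 \<in> A} = {}" by (auto simp: rough_sets_def)
  then have same_sets: "rough_sets (real (k+1)) y = rough_sets (real k) y"
    using rough_sets_Suc_split by auto
  have "primorial (real (k+1)) = primorial (real k)"
    using primorial_Suc[of k] False by (simp only: if_False mult_1_right)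
  then have "real (primorial (real k)) / real (primorial (real (k+1))) = 1"
    using primorial_pos[of "real k"] by simp
  then show ?thesis unfolding rough_log_sum_def same_sets by simp
qed

section \<open>Ordered factorisations of squarefree numbers\<close>

lemma prime_dvd_prod_list_nth:
  assumes "prime (p::nat)" "p dvd prod_list ds"
  shows "\<exists>i<length ds. p dvd ds ! i"
proof -
  have "p dvd (\<Prod>i\<in>{0..<length ds}. ds ! i)" using assms(2) by (simp add: prod.list_conv_set_nth)
  then show ?thesis using assms(1) by (subst (asm) prime_dvd_prod_iff) auto
qed

lemma squarefree_prod_list_prime_dvd_nth_unique:
  assumes "squarefree (prod_list ds)" "prime (p::nat)" "i < length ds" "j < length ds"
    and "p dvd ds ! i" "p dvd ds ! j"
  shows "i = j"
proof (rule ccontr)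
  assume "i \<noteq> j"
  let ?I = "{0..<length ds}"
  have "prod_list ds = ds ! i * (\<Prod>k\<in>?I - {i}. ds ! k)"
    using assms(3) by (simp add: prod.list_conv_set_nth prod.remove)
  also have "(\<Prod>k\<in>?I - {i}. ds ! k) = ds ! j * (\<Prod>k\<in>?I - {i} - {j}. ds ! k)"
    using assms(4) \<open>i \<noteq> j\<close> by (intro prod.remove) auto
  finally have "ds ! i * ds ! j dvd prod_list ds" by (simp add: mult.assoc)
  moreover have "p\<^sup>2 dvd ds ! i * ds ! j"
    using assms(5,6) by (simp add: power2_eq_square mult_dvd_mono)
  ultimately have "p dvd 1" using squarefreeD[OF assms(1)] dvd_trans by blast
  then show False using assms(2) by auto
qed

lemma squarefree_prod_list_dvd_nth_iff:
  assumes "squarefree (prod_list ds)" "prime (p::nat)" "p dvd prod_list ds"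
  defines "j \<equiv> LEAST j. j < length ds \<and> p dvd ds ! j"
  shows "j < length ds"
    and "i < length ds \<Longrightarrow> p dvd ds ! i \<longleftrightarrow> i = j"
proof -
  have "\<exists>j. j < length ds \<and> p dvd ds ! j" using prime_dvd_prod_list_nth[OF assms(2,3)] by blast
  then have j: "j < length ds \<and> p dvd ds ! j" unfolding j_def by (rule LeastI_ex)
  then show "j < length ds" ..
  show "p dvd ds ! i \<longleftrightarrow> i = j" if "i < length ds"
    using j that squarefree_prod_list_prime_dvd_nth_unique[OF assms(1,2)] by blast
qed

text \<open>A factorisation of a squarefree \<open>l\<close> into \<open>n\<close> factors is determined by the index of the factor
  that each prime divisor of \<open>l\<close> goes to.\<close>
lemma tau_le_power_card_prime_factors:
  assumes "squarefree (l::nat)"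
  shows "tau n l \<le> n ^ card (prime_factors l)"
proof -
  define tuples where "tuples = {ds :: nat list. length ds = n \<and> (\<forall>d\<in>set ds. 0 < d) \<and> prod_list ds = l}"
  define owner where "owner = (\<lambda>ds. restrict (\<lambda>p. LEAST i. i < length ds \<and> p dvd ds ! i) (prime_factors l))"
  have l: "l \<noteq> 0" using assms by (metis not_squarefree_0)
  have factors: "prime_factors (ds ! i) = {p \<in> prime_factors l. owner ds p = i}"
    if ds: "ds \<in> tuples" and i: "i < n" for ds i
  proof -
    have ds': "length ds = n" "prod_list ds = l" "0 < ds ! i" using ds i unfolding tuples_def by auto
    then have "ds ! i dvd l" using i prod_list_dvd[of "ds ! i" ds] by auto
    then have "p \<in> prime_factors (ds ! i) \<longleftrightarrow> p \<in> prime_factors l \<and> p dvd ds ! i" for p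
      using ds'(3) l by (auto simp: in_prime_factors_iff dest: dvd_trans)
    then show ?thesis
      using squarefree_prod_list_dvd_nth_iff(2)[of ds _ i] assms i ds' unfolding owner_def by auto
  qed
  have "inj_on owner tuples"
  proof (rule inj_onI)
    fix ds ds' assume ds: "ds \<in> tuples" and ds': "ds' \<in> tuples" and "owner ds = owner ds'"
    show "ds = ds'"
    proof (rule nth_equalityI)
      show "length ds = length ds'" using ds ds' unfolding tuples_def by auto
      fix i assume "i < length ds"
      then have i: "i < n" using ds unfolding tuples_def by auto
      have "ds ! i dvd l" "ds' ! i dvd l"
        using ds ds' i prod_list_dvd[of "ds ! i" ds] prod_list_dvd[of "ds' ! i" ds']
        unfolding tuples_def by auto
      then have "squarefree (ds ! i)" "squarefree (ds' ! i)" using assms squarefree_mono by auto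
      moreover have "prime_factors (ds ! i) = prime_factors (ds' ! i)"
        using factors[OF ds i] factors[OF ds' i] \<open>owner ds = owner ds'\<close> by simp
      ultimately show "ds ! i = ds' ! i" using prod_prime_factors_squarefree by metis
    qed
  qed
  moreover have "owner ` tuples \<subseteq> prime_factors l \<rightarrow>\<^sub>E {..<n}"
    using squarefree_prod_list_dvd_nth_iff(1) assms unfolding owner_def tuples_def
    by (auto simp: in_prime_factors_iff)
  ultimately have "card tuples \<le> card (prime_factors l \<rightarrow>\<^sub>E {..<n})"
    by (intro card_inj_on_le) (auto intro: finite_PiE)
  then show ?thesis unfolding tau_def tuples_def[symmetric] by (simp add: card_PiE)
qed

section \<open>Convolution of sums over rough sets\<close>

lemma covers_insert:
  assumes "x \<notin> C"
  shows "{(X, Y). X \<union> Y = insert x C}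
    = (\<lambda>(X, Y). (insert x X, Y)) ` {(X, Y). X \<union> Y = C}
      \<union> (\<lambda>(X, Y). (X, insert x Y)) ` {(X, Y). X \<union> Y = C}
      \<union> (\<lambda>(X, Y). (insert x X, insert x Y)) ` {(X, Y). X \<union> Y = C}"
    (is "?lhs = ?A \<union> ?B \<union> ?C")
proof (intro equalityI subsetI)
  fix q assume "q \<in> ?lhs"
  then obtain X Y where q: "q = (X, Y)" and XY: "X \<union> Y = insert x C" by auto
  have base: "(X - {x}) \<union> (Y - {x}) = C" using XY assms by auto
  consider "x \<in> X" "x \<in> Y" | "x \<in> X" "x \<notin> Y" | "x \<notin> X" "x \<in> Y" using XY by auto
  then show "q \<in> ?A \<union> ?B \<union> ?C"
  proof cases
    case 1
    then have "q = (insert x (X - {x}), insert x (Y - {x}))" using q by auto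
    then show ?thesis using base by (intro UnI2 image_eqI[where x = "(X - {x}, Y - {x})"]) auto
  next
    case 2
    then have "q = (insert x (X - {x}), Y)" "(X - {x}) \<union> Y = C" using q base by auto
    then show ?thesis by (intro UnI1 image_eqI[where x = "(X - {x}, Y)"]) auto
  next
    case 3
    then have "q = (X, insert x (Y - {x}))" "X \<union> (Y - {x}) = C" using q base by auto
    then show ?thesis by (intro UnI1 UnI2 image_eqI[where x = "(X, Y - {x})"]) auto
  qed
qed auto

lemma prod_add_add_mult_eq_sum_covers:
  fixes f h :: "'a \<Rightarrow> 'b::comm_semiring_1"
  assumes "finite C"
  shows "(\<Prod>p\<in>C. f p + h p + f p * h p) = (\<Sum>(X, Y)\<in>{(X, Y). X \<union> Y = C}. (\<Prod>p\<in>X. f p) * (\<Prod>p\<in>Y. h p))"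
  using assms
proof (induction C rule: finite_induct)
  case empty
  have "{(X, Y). X \<union> Y = ({}::'a set)} = {({}, {})}" by auto
  then show ?case by simp
next
  case (insert x C)
  define covers where "covers = {(X, Y). X \<union> Y = C}"
  define F where "F = (\<lambda>(X, Y). (\<Prod>p\<in>X. f p) * (\<Prod>p\<in>Y. h p))"
  have finite_covers: "finite covers" unfolding covers_def
    by (rule finite_subset[of _ "Pow C \<times> Pow C"]) (use insert.hyps in auto)
  have cover_mem: "finite X \<and> finite Y \<and> x \<notin> X \<and> x \<notin> Y" if "(X, Y) \<in> covers" for X Y
    using that insert.hyps finite_subset unfolding covers_def by auto
  define left where "left = (\<lambda>(X::'a set, Y::'a set). (insert x X, Y))"
  define right where "right = (\<lambda>(X::'a set, Y::'a set). (X, insert x Y))"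
  define both where "both = (\<lambda>(X::'a set, Y::'a set). (insert x X, insert x Y))"
  have inj: "inj_on left covers" "inj_on right covers" "inj_on both covers"
    unfolding inj_on_def left_def right_def both_def using cover_mem by (auto simp: insert_ident)
  have "left ` covers \<inter> right ` covers = {}" "(left ` covers \<union> right ` covers) \<inter> both ` covers = {}"
    unfolding left_def right_def both_def using cover_mem by fastforce+
  then have "(\<Sum>q\<in>{(X, Y). X \<union> Y = insert x C}. F q) = sum F (left ` covers) + sum F (right ` covers) + sum F (both ` covers)"
    unfolding covers_insert[OF insert.hyps(2)] covers_def[symmetric] left_def[symmetric]
      right_def[symmetric] both_def[symmetric]
    using finite_covers by (simp add: sum.union_disjoint)
  also have "sum F (left ` covers) = (\<Sum>q\<in>covers. f x * F q)"
    by (subst sum.reindex[OF inj(1)]) (auto intro!: sum.cong simp: F_def left_def mult.assoc dest!: cover_mem)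
  also have "sum F (right ` covers) = (\<Sum>q\<in>covers. h x * F q)"
    by (subst sum.reindex[OF inj(2)]) (auto intro!: sum.cong simp: F_def right_def mult_ac dest!: cover_mem)
  also have "sum F (both ` covers) = (\<Sum>q\<in>covers. f x * h x * F q)"
    by (subst sum.reindex[OF inj(3)]) (auto intro!: sum.cong simp: F_def both_def mult_ac dest!: cover_mem)
  also have "(\<Sum>q\<in>covers. f x * F q) + (\<Sum>q\<in>covers. h x * F q) + (\<Sum>q\<in>covers. f x * h x * F q)
      = (f x + h x + f x * h x) * sum F covers"
    by (simp add: sum_distrib_left algebra_simps)
  finally show ?case using insert unfolding covers_def F_def by simp
qed

lemma prod_union_primes_le:
  assumes "finite A" "finite L" "\<forall>p\<in>A \<union> L. prime (p::nat)"
  shows "(\<Prod>p\<in>A \<union> L. real p) \<le> (\<Prod>p\<in>A. real p) * (\<Prod>p\<in>L. real p)"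
proof -
  have "(\<Prod>p\<in>A \<union> L. real p) * 1 \<le> (\<Prod>p\<in>A \<union> L. real p) * (\<Prod>p\<in>A \<inter> L. real p)"
    using assms(3) by (intro mult_left_mono one_le_prod_primes prod_nonneg) auto
  then show ?thesis using prod.union_inter[OF assms(1,2), of real] by simp
qed

lemma rough_sets_union:
  assumes L: "L \<in> rough_sets y z" and A: "A \<in> rough_sets y (z / (\<Prod>p\<in>L. real p))"
  shows "A \<union> L \<in> rough_sets y z"
    and "ln (z / (\<Prod>p\<in>L. real p) / (\<Prod>p\<in>A. real p)) \<le> ln (z / (\<Prod>p\<in>A \<union> L. real p))"
proof -
  note L' = rough_setsD[OF L] and A' = rough_setsD[OF A]
  have union_le: "(\<Prod>p\<in>A \<union> L. real p) \<le> (\<Prod>p\<in>A. real p) * (\<Prod>p\<in>L. real p)"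
    using L' A' by (intro prod_union_primes_le) auto
  have product_le: "(\<Prod>p\<in>A. real p) * (\<Prod>p\<in>L. real p) \<le> z"
    using A'(4) rough_sets_prod_ge_1[OF L] by (simp add: pos_le_divide_eq)
  show "A \<union> L \<in> rough_sets y z"
    using L' A' union_le product_le unfolding rough_sets_def by auto
  have "1 \<le> (\<Prod>p\<in>A \<union> L. real p)" using L'(2) A'(2) by (intro one_le_prod_primes) auto
  then have "0 < (\<Prod>p\<in>A \<union> L. real p)" by linarith
  then show "ln (z / (\<Prod>p\<in>L. real p) / (\<Prod>p\<in>A. real p)) \<le> ln (z / (\<Prod>p\<in>A \<union> L. real p))"
    using ln_divide_antimono[OF _ union_le product_le] by (simp add: mult.commute)
qed

lemma finite_rough_sets_covers: "finite {(L, A). A \<union> L \<in> rough_sets y z}"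
proof (rule finite_subset)
  show "{(L, A). A \<union> L \<in> rough_sets y z} \<subseteq> Pow (\<Union> (rough_sets y z)) \<times> Pow (\<Union> (rough_sets y z))"
    by auto
  have "finite (\<Union> (rough_sets y z))"
    by (intro finite_Union finite_rough_sets) (auto dest: rough_setsD(1))
  then show "finite (Pow (\<Union> (rough_sets y z)) \<times> Pow (\<Union> (rough_sets y z)))" by simp
qed

lemma sum_rough_sets_covers:
  fixes w g :: "nat \<Rightarrow> real" and H :: "nat set \<Rightarrow> real"
  shows "(\<Sum>(L, A)\<in>{(L, A). A \<union> L \<in> rough_sets y z}. (\<Prod>p\<in>L. w p) * ((\<Prod>p\<in>A. g p) * H (A \<union> L)))
    = (\<Sum>C\<in>rough_sets y z. (\<Prod>p\<in>C. w p + g p + w p * g p) * H C)"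
proof -
  define F where "F = (\<lambda>(L, A). (\<Prod>p\<in>L. w p) * ((\<Prod>p\<in>A. g p) * H (A \<union> L)))"
  define covers where "covers = {(L, A). A \<union> L \<in> rough_sets y z}"
  have "sum F covers = (\<Sum>C\<in>rough_sets y z. sum F {q\<in>covers. (\<lambda>(L, A). A \<union> L) q = C})"
    by (rule sum.group[symmetric]) (auto simp: covers_def finite_rough_sets finite_rough_sets_covers)
  also have "\<dots> = (\<Sum>C\<in>rough_sets y z. (\<Prod>p\<in>C. w p + g p + w p * g p) * H C)"
  proof (rule sum.cong[OF refl])
    fix C assume C: "C \<in> rough_sets y z"
    have "{q\<in>covers. (\<lambda>(L, A). A \<union> L) q = C} = {(X, Y). X \<union> Y = C}"
      unfolding covers_def using C by (auto simp: Un_commute)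
    moreover have "sum F {(X, Y). X \<union> Y = C}
        = (\<Sum>(X, Y)\<in>{(X, Y). X \<union> Y = C}. (\<Prod>p\<in>X. w p) * (\<Prod>p\<in>Y. g p)) * H C"
      unfolding F_def sum_distrib_right by (intro sum.cong) (auto simp: Un_commute)
    ultimately show "sum F {q\<in>covers. (\<lambda>(L, A). A \<union> L) q = C} = (\<Prod>p\<in>C. w p + g p + w p * g p) * H C"
      using prod_add_add_mult_eq_sum_covers[of C w g] rough_setsD(1)[OF C] by simp
  qed
  finally show ?thesis unfolding F_def covers_def .
qed

text \<open>Each pair \<open>(L, A)\<close> is charged to \<open>C = A \<union> L\<close>: the logarithm only grows when \<open>A\<close> and \<open>L\<close> overlap,
  and the pairs covering a fixed \<open>C\<close> sum to the product on the right.\<close>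
lemma sum_rough_sets_convolution_le:
  fixes w g :: "nat \<Rightarrow> real"
  assumes w_nonneg: "\<And>p. prime p \<Longrightarrow> y < real p \<Longrightarrow> 0 \<le> w p"
    and g_nonneg: "\<And>p. prime p \<Longrightarrow> y < real p \<Longrightarrow> 0 \<le> g p"
  shows "(\<Sum>L\<in>rough_sets y z. (\<Prod>p\<in>L. w p) *
           (\<Sum>A\<in>rough_sets y (z / (\<Prod>p\<in>L. real p)).
              (\<Prod>p\<in>A. g p) * ln (z / (\<Prod>p\<in>L. real p) / (\<Prod>p\<in>A. real p))))
       \<le> (\<Sum>C\<in>rough_sets y z. (\<Prod>p\<in>C. w p + g p + w p * g p) * ln (z / (\<Prod>p\<in>C. real p)))"
proof -
  define pairs where "pairs = Sigma (rough_sets y z) (\<lambda>L. rough_sets y (z / (\<Prod>p\<in>L. real p)))"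
  define covers where "covers = {(L, A). A \<union> L \<in> rough_sets y z}"
  define F where "F = (\<lambda>(L, A). (\<Prod>p\<in>L. w p) * ((\<Prod>p\<in>A. g p) * ln (z / (\<Prod>p\<in>A \<union> L. real p))))"
  have weights_nonneg: "0 \<le> (\<Prod>p\<in>L. w p)" "0 \<le> (\<Prod>p\<in>A. g p)" if "(L, A) \<in> covers" for L A
    using that rough_setsD[of "A \<union> L" y z] w_nonneg g_nonneg unfolding covers_def
    by (auto intro!: prod_nonneg)
  have F_nonneg: "0 \<le> F q" if q_cover: "q \<in> covers" for q
  proof -
    obtain L A where q: "q = (L, A)" and C: "A \<union> L \<in> rough_sets y z"
      using q_cover unfolding covers_def by (cases q) auto
    have "0 \<le> ln (z / (\<Prod>p\<in>A \<union> L. real p))"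
      using rough_sets_prod_ge_1[OF C] rough_setsD(4)[OF C] by simp
    then show ?thesis unfolding F_def q using weights_nonneg q_cover q by simp
  qed
  have pairs_covers: "pairs \<subseteq> covers"
    unfolding pairs_def covers_def using rough_sets_union(1) by auto
  have "(\<Sum>L\<in>rough_sets y z. (\<Prod>p\<in>L. w p) *
           (\<Sum>A\<in>rough_sets y (z / (\<Prod>p\<in>L. real p)).
              (\<Prod>p\<in>A. g p) * ln (z / (\<Prod>p\<in>L. real p) / (\<Prod>p\<in>A. real p))))
      = (\<Sum>(L, A)\<in>pairs. (\<Prod>p\<in>L. w p) * ((\<Prod>p\<in>A. g p) * ln (z / (\<Prod>p\<in>L. real p) / (\<Prod>p\<in>A. real p))))"
    unfolding pairs_def by (subst sum.Sigma[symmetric]) (auto simp: finite_rough_sets sum_distrib_left)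
  also have "\<dots> \<le> sum F pairs"
  proof (rule sum_mono, clarify)
    fix L A assume "(L, A) \<in> pairs"
    then have "L \<in> rough_sets y z" "A \<in> rough_sets y (z / (\<Prod>p\<in>L. real p))" "(L, A) \<in> covers"
      using pairs_covers unfolding pairs_def by auto
    then show "(\<Prod>p\<in>L. w p) * ((\<Prod>p\<in>A. g p) * ln (z / (\<Prod>p\<in>L. real p) / (\<Prod>p\<in>A. real p))) \<le> F (L, A)"
      unfolding F_def using rough_sets_union(2) weights_nonneg by (simp add: mult_left_mono)
  qed
  also have "\<dots> \<le> sum F covers"
    using F_nonneg pairs_covers finite_rough_sets_covers unfolding covers_def by (intro sum_mono2) auto
  also have "\<dots> = (\<Sum>C\<in>rough_sets y z. (\<Prod>p\<in>C. w p + g p + w p * g p) * ln (z / (\<Prod>p\<in>C. real p)))"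
    unfolding F_def covers_def by (rule sum_rough_sets_covers)
  finally show ?thesis .
qed

section \<open>A lower bound for \<open>F\<^sub>k\<^sub>+\<^sub>1\<close>\<close>

lemma union_mem_rough_sets_iff:
  assumes "C \<inter> B = {}"
  shows "C \<union> B \<in> rough_sets y z \<longleftrightarrow>
    C \<in> rough_sets y z \<and> B \<subseteq> {p. prime p \<and> y < real p \<and> real p \<le> z}
      \<and> (\<Prod>p\<in>B. real p) \<le> z / (\<Prod>p\<in>C. real p)"
proof
  assume U: "C \<union> B \<in> rough_sets y z"
  note U' = rough_setsD[OF U]
  have "finite C" "finite B" using U'(1) by auto
  then have prod_U: "(\<Prod>p\<in>C \<union> B. real p) = (\<Prod>p\<in>C. real p) * (\<Prod>p\<in>B. real p)"
    using assms by (rule prod.union_disjoint)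
  have "1 \<le> (\<Prod>p\<in>C. real p)" "1 \<le> (\<Prod>p\<in>B. real p)"
    using U'(2) by (intro one_le_prod_primes; auto)+
  then have "(\<Prod>p\<in>C. real p) \<le> z" "(\<Prod>p\<in>B. real p) \<le> z / (\<Prod>p\<in>C. real p)"
    using U'(4) unfolding prod_U by (auto simp: pos_le_divide_eq mult.commute intro: order_trans[rotated])
  then show "C \<in> rough_sets y z \<and> B \<subseteq> {p. prime p \<and> y < real p \<and> real p \<le> z}
      \<and> (\<Prod>p\<in>B. real p) \<le> z / (\<Prod>p\<in>C. real p)"
    using U' \<open>finite C\<close> rough_sets_mem_le[OF U] unfolding rough_sets_def by auto
next
  assume R: "C \<in> rough_sets y z \<and> B \<subseteq> {p. prime p \<and> y < real p \<and> real p \<le> z}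
      \<and> (\<Prod>p\<in>B. real p) \<le> z / (\<Prod>p\<in>C. real p)"
  note C' = rough_setsD[OF conjunct1[OF R]]
  have "finite B" using R by (intro finite_subset[OF _ finite_primes_le[of z]]) auto
  then have "(\<Prod>p\<in>C \<union> B. real p) = (\<Prod>p\<in>C. real p) * (\<Prod>p\<in>B. real p)"
    using C'(1) assms by (intro prod.union_disjoint)
  also have "\<dots> \<le> z"
    using R rough_sets_prod_ge_1[OF conjunct1[OF R]] by (simp add: pos_le_divide_eq mult.commute)
  finally show "C \<union> B \<in> rough_sets y z"
    using R C' \<open>finite B\<close> unfolding rough_sets_def by auto
qed

lemma sum_rough_sets_prod_add:
  fixes a b :: "nat \<Rightarrow> real" and y z :: real
  defines "Pz \<equiv> {p. prime p \<and> y < real p \<and> real p \<le> z}"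
  shows "(\<Sum>S\<in>rough_sets y z. \<Prod>p\<in>S. a p + b p)
    = (\<Sum>C\<in>rough_sets y z. (\<Prod>p\<in>C. a p) *
        (\<Sum>B\<in>{B. B \<subseteq> Pz - C \<and> (\<Prod>p\<in>B. real p) \<le> z / (\<Prod>p\<in>C. real p)}. \<Prod>p\<in>B. b p))"
proof -
  define rest where "rest = (\<lambda>C. {B. B \<subseteq> Pz - C \<and> (\<Prod>p\<in>B. real p) \<le> z / (\<Prod>p\<in>C. real p)})"
  have "finite Pz" unfolding Pz_def by (rule finite_subset[OF _ finite_primes_le]) auto
  then have finite_rest: "finite (rest C)" for C
    unfolding rest_def by (auto intro: finite_subset[of _ "Pow Pz"])
  have "(\<Sum>S\<in>rough_sets y z. \<Prod>p\<in>S. a p + b p)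
      = (\<Sum>S\<in>rough_sets y z. \<Sum>C\<in>Pow S. (\<Prod>p\<in>C. a p) * (\<Prod>p\<in>S - C. b p))"
    by (rule sum.cong[OF refl], rule prod_add) (auto dest: rough_setsD)
  also have "\<dots> = (\<Sum>(S, C)\<in>Sigma (rough_sets y z) Pow. (\<Prod>p\<in>C. a p) * (\<Prod>p\<in>S - C. b p))"
    by (rule sum.Sigma) (auto simp: finite_rough_sets dest: rough_setsD)
  also have "\<dots> = (\<Sum>(C, B)\<in>Sigma (rough_sets y z) rest. (\<Prod>p\<in>C. a p) * (\<Prod>p\<in>B. b p))"
  proof (rule sum.reindex_bij_witness[where j = "\<lambda>(S, C). (C, S - C)" and i = "\<lambda>(C, B). (C \<union> B, C)"])
    fix q assume "q \<in> Sigma (rough_sets y z) Pow"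
    then obtain S C where q: "q = (S, C)" and S: "S \<in> rough_sets y z" and "C \<subseteq> S" by auto
    then have "C \<union> (S - C) \<in> rough_sets y z" by (simp add: Un_absorb1)
    then have "C \<in> rough_sets y z \<and> S - C \<subseteq> Pz \<and> (\<Prod>p\<in>S - C. real p) \<le> z / (\<Prod>p\<in>C. real p)"
      using union_mem_rough_sets_iff[of C "S - C" y z] unfolding Pz_def by blast
    then show "(case q of (S, C) \<Rightarrow> (C, S - C)) \<in> Sigma (rough_sets y z) rest"
      using q unfolding rest_def by auto
  next
    fix q assume "q \<in> Sigma (rough_sets y z) rest"
    then obtain C B where q: "q = (C, B)" and "C \<in> rough_sets y z" and "B \<in> rest C" by auto
    then have "C \<union> B \<in> rough_sets y z" "C \<inter> B = {}"
      using union_mem_rough_sets_iff[of C B y z] unfolding rest_def Pz_def by auto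
    then show "(case q of (C, B) \<Rightarrow> (C \<union> B, C)) \<in> Sigma (rough_sets y z) Pow"
      "(case case q of (C, B) \<Rightarrow> (C \<union> B, C) of (S, C) \<Rightarrow> (C, S - C)) = q"
      using q by auto
  qed (auto simp: Un_absorb1)
  also have "\<dots> = (\<Sum>C\<in>rough_sets y z. (\<Prod>p\<in>C. a p) * (\<Sum>B\<in>rest C. \<Prod>p\<in>B. b p))"
    by (subst sum.Sigma[symmetric]) (auto simp: finite_rough_sets finite_rest sum_distrib_left)
  finally show ?thesis unfolding rest_def .
qed

lemma weight_split:
  fixes c x :: real
  assumes "0 \<le> c" "c + 1 < x"
  shows "c * x / ((x - 1) * (x - (c + 1))) + 1 / (x - 1) = (c + 1) / (x - (c + 1))"
    and "c * x / ((x - 1) * (x - (c + 1))) * (1 - 1 / x) = c / (x - (c + 1))"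
proof -
  have "x - 1 \<noteq> 0" "x - (c + 1) \<noteq> 0" "x \<noteq> 0" using assms by auto
  then show "c * x / ((x - 1) * (x - (c + 1))) + 1 / (x - 1) = (c + 1) / (x - (c + 1))"
    and "c * x / ((x - 1) * (x - (c + 1))) * (1 - 1 / x) = c / (x - (c + 1))"
    by (simp_all add: divide_simps) (simp_all add: algebra_simps)
qed

lemma euler_product_mult_ln_le_inv_totient_sum:
  assumes C: "C \<in> rough_sets y z"
  shows "(\<Prod>p\<in>{p. prime p \<and> real p \<le> y}. 1 - 1 / real p) * ((\<Prod>p\<in>C. 1 - 1 / real p) * ln (z / (\<Prod>p\<in>C. real p)))
    \<le> inv_totient_sum ({p. prime p \<and> y < real p \<and> real p \<le> z} - C) (z / (\<Prod>p\<in>C. real p))"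
proof -
  define D0 where "D0 = {p::nat. prime p \<and> real p \<le> y}"
  define Pz where "Pz = {p::nat. prime p \<and> real p \<le> z}"
  define x where "x = z / (\<Prod>p\<in>C. real p)"
  note C' = rough_setsD[OF C]
  have "1 \<le> (\<Prod>p\<in>C. real p)" by (rule rough_sets_prod_ge_1[OF C])
  then have x: "1 \<le> x" "x \<le> z"
    using C'(4) unfolding x_def by (auto simp: field_simps intro: order_trans[OF _ C'(4)])
  have disjoint: "D0 \<inter> C = {}" using C'(3) unfolding D0_def by force
  have "(\<Prod>p\<in>D0 \<union> C. 1 - 1 / real p) * ln x \<le> inv_totient_sum (Pz - (D0 \<union> C)) x"
    using x C' finite_primes_le[of y] finite_primes_le[of z]
    by (intro ln_le_inv_totient_sum) (auto simp: D0_def Pz_def)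
  moreover have "(\<Prod>p\<in>D0 \<union> C. 1 - 1 / real p) = (\<Prod>p\<in>D0. 1 - 1 / real p) * (\<Prod>p\<in>C. 1 - 1 / real p)"
    using disjoint C'(1) finite_primes_le[of y] unfolding D0_def by (intro prod.union_disjoint) auto
  moreover have "Pz - (D0 \<union> C) = {p. prime p \<and> y < real p \<and> real p \<le> z} - C"
    unfolding Pz_def D0_def by auto
  ultimately show ?thesis unfolding D0_def x_def by (simp add: mult.assoc)
qed

text \<open>Split \<open>(k + 1) / (p - k - 1) = a(p) + 1 / (p - 1)\<close> as in \<open>weight_split\<close> and expand the product:
  the parts \<open>1 / (p - 1)\<close> assemble into inverse totient sums, bounded from below by the previous
  lemma, and \<open>a(p) (1 - 1 / p) = k / (p - k - 1)\<close>.\<close>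
lemma Fk_Suc_ge_sum_rough_sets:
  "(\<Prod>p\<in>{p::nat. prime p \<and> p \<le> k + 1}. 1 - 1 / real p) *
      (\<Sum>C\<in>rough_sets (real (k+1)) z. (\<Prod>p\<in>C. real k / (real p - real (k+1))) * ln (z / (\<Prod>p\<in>C. real p)))
    \<le> Fk (k + 1) z"
proof -
  define a where "a = (\<lambda>p::nat. real k * real p / ((real p - 1) * (real p - real (k+1))))"
  define b where "b = (\<lambda>p::nat. 1 / (real p - 1))"
  define e where "e = (\<Prod>p\<in>{p::nat. prime p \<and> real p \<le> real (k+1)}. 1 - 1 / real p)"
  define Pz where "Pz = {p. prime p \<and> real (k+1) < real p \<and> real p \<le> z}"
  have split: "a p + b p = real (k+1) / (real p - real (k+1))"
    "a p * (1 - 1 / real p) = real k / (real p - real (k+1))"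
    "0 \<le> a p" if "C \<in> rough_sets (real (k+1)) z" "p \<in> C" for C p
  proof -
    have "0 \<le> real k" "real k + 1 < real p" using that rough_setsD(3) by fastforce+
    note weights = weight_split[OF this]
    show "a p + b p = real (k+1) / (real p - real (k+1))"
      unfolding a_def b_def of_nat_add of_nat_1 by (rule weights(1))
    show "a p * (1 - 1 / real p) = real k / (real p - real (k+1))"
      unfolding a_def of_nat_add of_nat_1 by (rule weights(2))
    show "0 \<le> a p"
      unfolding a_def using \<open>real k + 1 < real p\<close>
      by (intro divide_nonneg_pos mult_nonneg_nonneg mult_pos_pos) auto
  qed
  have "e * (\<Sum>C\<in>rough_sets (real (k+1)) z. (\<Prod>p\<in>C. real k / (real p - real (k+1))) * ln (z / (\<Prod>p\<in>C. real p)))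
      = (\<Sum>C\<in>rough_sets (real (k+1)) z. (\<Prod>p\<in>C. a p) *
          (e * ((\<Prod>p\<in>C. 1 - 1 / real p) * ln (z / (\<Prod>p\<in>C. real p)))))"
    unfolding sum_distrib_left
    by (intro sum.cong refl) (simp add: split(2) prod.distrib[symmetric] mult_ac cong: prod.cong)
  also have "\<dots> \<le> (\<Sum>C\<in>rough_sets (real (k+1)) z. (\<Prod>p\<in>C. a p) * inv_totient_sum (Pz - C) (z / (\<Prod>p\<in>C. real p)))"
    unfolding e_def Pz_def using split(3)
    by (intro sum_mono mult_left_mono euler_product_mult_ln_le_inv_totient_sum prod_nonneg) auto
  also have "\<dots> = (\<Sum>S\<in>rough_sets (real (k+1)) z. \<Prod>p\<in>S. a p + b p)"
    unfolding Pz_def inv_totient_sum_def b_def[symmetric] by (rule sum_rough_sets_prod_add[symmetric])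
  also have "\<dots> = Fk (k + 1) z"
    unfolding Fk_eq_sum_rough_sets using split(1) by (intro sum.cong refl prod.cong) auto
  moreover have "{p::nat. prime p \<and> real p \<le> real (k+1)} = {p. prime p \<and> p \<le> k + 1}"
    by (simp only: of_nat_le_iff)
  ultimately show ?thesis unfolding e_def by simp
qed

lemma psi_prod_rough_set:
  assumes "L \<in> rough_sets (real n) z"
  shows "psi n (\<Prod>p\<in>L. p) = (\<Prod>p\<in>L. real p - real n)"
proof -
  note L = rough_setsD[OF assms]
  have "{p \<in> prime_factors (\<Prod>p\<in>L. p). n < p} = L"
    using L(3) prime_factors_prod_primes[OF L(1,2)] by auto
  then show ?thesis unfolding psi_def by simp
qed

lemma weighted_integral_Fk_le:
  assumes L: "L \<in> rough_sets (real (k+1)) z"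
  defines "l \<equiv> \<Prod>p\<in>L. p"
  shows "real (primorial (real k)) / real (primorial (real (k+1)))
      * (real (tau k l) / (psi (k+1) l * real l) * integral {1..z / real l} (\<lambda>t. Fk k t / t))
    \<le> (\<Prod>p\<in>L. real k / (real p * (real p - real (k+1))))
        * rough_log_sum (real (k+1)) k (z / (\<Prod>p\<in>L. real p))"
proof -
  define c where "c = real (primorial (real k)) / real (primorial (real (k+1)))"
  note L' = rough_setsD[OF L]
  have real_l: "real l = (\<Prod>p\<in>L. real p)" unfolding l_def by simp
  have "1 \<le> real l" unfolding real_l using rough_sets_prod_ge_1[OF L] .
  then have z_l: "1 \<le> z / real l" using L'(4) unfolding real_l by simp
  have denom_pos: "0 < psi (k+1) l * real l"
    unfolding l_def psi_prod_rough_set[OF L] using L'(3) \<open>1 \<le> real l\<close> unfolding l_def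
    by (intro mult_pos_pos prod_pos) auto
  have "tau k l \<le> k ^ card L"
    using tau_le_power_card_prime_factors[of l k] prime_factors_prod_primes[OF L'(1,2)]
      squarefree_prod_primes[OF L'(1,2)] unfolding l_def by simp
  then have "real (tau k l) \<le> real k ^ card L" by (metis of_nat_le_iff of_nat_power)
  then have "real (tau k l) \<le> (\<Prod>p\<in>L. real k)" by simp
  moreover have "(\<Prod>p\<in>L. real k / (real p * (real p - real (k+1))))
      = (\<Prod>p\<in>L. real k) / (psi (k+1) l * real l)"
    unfolding psi_prod_rough_set[OF L, folded l_def] real_l prod.distrib[symmetric] prod_dividef[symmetric]
    by (simp add: mult.commute)
  ultimately have tau_le:
    "real (tau k l) / (psi (k+1) l * real l) \<le> (\<Prod>p\<in>L. real k / (real p * (real p - real (k+1))))"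
    using denom_pos by (simp add: divide_right_mono)
  have integral_le: "c * integral {1..z / real l} (\<lambda>t. Fk k t / t) \<le> rough_log_sum (real (k+1)) k (z / real l)"
    unfolding integral_Fk[OF z_l] c_def by (rule primorial_ratio_mult_rough_log_sum_le)
  have "0 \<le> c * integral {1..z / real l} (\<lambda>t. Fk k t / t)"
    unfolding integral_Fk[OF z_l] c_def by (intro mult_nonneg_nonneg rough_log_sum_nonneg) auto
  moreover have "0 \<le> (\<Prod>p\<in>L. real k / (real p * (real p - real (k+1))))"
    using denom_pos tau_le by (meson divide_nonneg_pos of_nat_0_le_iff order_trans)
  ultimately have "real (tau k l) / (psi (k+1) l * real l) * (c * integral {1..z / real l} (\<lambda>t. Fk k t / t))
      \<le> (\<Prod>p\<in>L. real k / (real p * (real p - real (k+1)))) * rough_log_sum (real (k+1)) k (z / real l)"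
    using tau_le integral_le by (intro mult_mono)
  then show ?thesis unfolding c_def by (simp only: real_l mult.left_commute)
qed

text \<open>With \<open>w = c / (x (x - c - 1))\<close> and \<open>g = c / (x - c)\<close> this says \<open>(1 + w) (1 + g) = 1 + c / (x - c - 1)\<close>.\<close>
lemma weight_add_add_mult_eq:
  fixes c x :: real
  assumes "x \<noteq> 0" "x \<noteq> c" "x \<noteq> c + 1"
  shows "c / (x * (x - (c + 1))) + c / (x - c) + c / (x * (x - (c + 1))) * (c / (x - c))
       = c / (x - (c + 1))"
proof -
  have "x - (c + 1) \<noteq> 0" "x - c \<noteq> 0" using assms by auto
  with assms(1) show ?thesis by (simp add: divide_simps) algebra
qed

lemma primorial_ratio_mult_sum_le:
  "real (primorial (real k)) / real (primorial (real (k+1)))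
    * (\<Sum>l\<in>{l::nat. 0 < l \<and> real l \<le> z \<and> coprime l (primorial (real (k+1)))}.
         mu2 l * real (tau k l) / (psi (k+1) l * real l) * integral {1 .. z / real l} (\<lambda>t. Fk k t / t))
   \<le> (\<Sum>C\<in>rough_sets (real (k+1)) z. (\<Prod>p\<in>C. real k / (real p - real (k+1))) * ln (z / (\<Prod>p\<in>C. real p)))"
proof -
  define c where "c = real (primorial (real k)) / real (primorial (real (k+1)))"
  define w where "w = (\<lambda>p::nat. real k / (real p * (real p - real (k+1))))"
  define g where "g = (\<lambda>p::nat. real k / (real p - real k))"
  define T where "T = (\<lambda>l. real (tau k l) / (psi (k+1) l * real l) * integral {1 .. z / real l} (\<lambda>t. Fk k t / t))"
  have "c * (\<Sum>l\<in>{l::nat. 0 < l \<and> real l \<le> z \<and> coprime l (primorial (real (k+1)))}.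
         mu2 l * real (tau k l) / (psi (k+1) l * real l) * integral {1 .. z / real l} (\<lambda>t. Fk k t / t))
    = c * (\<Sum>l\<in>{l::nat. 0 < l \<and> real l \<le> z \<and> coprime l (primorial (real (k+1)))}. mu2 l * T l)"
    unfolding T_def by (simp only: times_divide_eq_left times_divide_eq_right mult.assoc)
  also have "\<dots> = (\<Sum>L\<in>rough_sets (real (k+1)) z. c * T (\<Prod>p\<in>L. p))"
    by (simp only: sum_squarefree_coprime_primorial sum_distrib_left)
  also have "\<dots> \<le> (\<Sum>L\<in>rough_sets (real (k+1)) z. (\<Prod>p\<in>L. w p) * rough_log_sum (real (k+1)) k (z / (\<Prod>p\<in>L. real p)))"
    unfolding c_def w_def T_def by (intro sum_mono weighted_integral_Fk_le)
  also have "\<dots> \<le> (\<Sum>C\<in>rough_sets (real (k+1)) z. (\<Prod>p\<in>C. w p + g p + w p * g p) * ln (z / (\<Prod>p\<in>C. real p)))"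
    unfolding rough_log_sum_def g_def[symmetric]
    by (rule sum_rough_sets_convolution_le) (auto simp: w_def g_def intro!: divide_nonneg_pos)
  also have "\<dots> = (\<Sum>C\<in>rough_sets (real (k+1)) z. (\<Prod>p\<in>C. real k / (real p - real (k+1))) * ln (z / (\<Prod>p\<in>C. real p)))"
  proof (intro sum.cong refl arg_cong2[where f = "(*)"] prod.cong)
    fix C p assume "C \<in> rough_sets (real (k+1)) z" "p \<in> C"
    then have "prime p" "real (k+1) < real p" using rough_setsD by blast+
    then have "real p \<noteq> 0" "real p \<noteq> real k" "real p \<noteq> real k + 1" by auto
    then show "w p + g p + w p * g p = real k / (real p - real (k+1))"
      unfolding w_def g_def of_nat_add of_nat_1 by (rule weight_add_add_mult_eq)
  qed
  finally show ?thesis unfolding c_def .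
qed

theorem mainTheorem8:
  fixes \<kappa> :: nat and z :: real
  assumes "\<kappa> \<ge> 1" and "z \<ge> 1"
  shows "Fk (\<kappa> + 1) z \<ge>
    real (primorial (real \<kappa>)) / real (primorial (real (\<kappa> + 1)))
    * (\<Prod>p\<in>{p::nat. prime p \<and> p \<le> \<kappa> + 1}. 1 - 1 / real p)
    * (\<Sum>l\<in>{l::nat. 0 < l \<and> real l \<le> z \<and> coprime l (primorial (real (\<kappa> + 1)))}.
         mu2 l * real (tau \<kappa> l) / (psi (\<kappa> + 1) l * real l)
         * integral {1 .. z / real l} (\<lambda>t. Fk \<kappa> t / t))"
proof -
  define c where "c = real (primorial (real \<kappa>)) / real (primorial (real (\<kappa> + 1)))"
  define e where "e = (\<Prod>p\<in>{p::nat. prime p \<and> p \<le> \<kappa> + 1}. 1 - 1 / real p)"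
  define S where "S = (\<Sum>l\<in>{l::nat. 0 < l \<and> real l \<le> z \<and> coprime l (primorial (real (\<kappa> + 1)))}.
         mu2 l * real (tau \<kappa> l) / (psi (\<kappa> + 1) l * real l) * integral {1 .. z / real l} (\<lambda>t. Fk \<kappa> t / t))"
  have "0 \<le> e" unfolding e_def by (intro prod_nonneg euler_factor_nonneg) auto
  then have "e * (c * S) \<le> e * (\<Sum>C\<in>rough_sets (real (\<kappa>+1)) z.
      (\<Prod>p\<in>C. real \<kappa> / (real p - real (\<kappa>+1))) * ln (z / (\<Prod>p\<in>C. real p)))"
    unfolding c_def S_def by (intro mult_left_mono primorial_ratio_mult_sum_le)
  also have "\<dots> \<le> Fk (\<kappa> + 1) z" unfolding e_def by (rule Fk_Suc_ge_sum_rough_sets)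
  finally show ?thesis unfolding c_def[symmetric] e_def[symmetric] S_def[symmetric]
    by (simp add: algebra_simps)
qed

end
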